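(* Let $d\ge2$ and $p\ge1$ be integers and let $\mathbb{P}_k^{(d)}$ be the uniform probability measure on $\mathcal{C}_k^{(d)}$. Then with $\kappa_{p,d}:=(2pd^pe^p)^{-1}$, $$\mathbb{P}_k^{(d)}(T\text{ is not }p\text{-perfect})\le e^{-\kappa_{p,d}(k-p)_+}\qquad\text{for all }k\in\mathbb{N},$$ where $x_+=\max(x,0)$.
   Context: A $d$-Catalan tree is a rooted planar tree in which every vertex has $0$ or $d$ children; $\mathcal{C}_k^{(d)}$ is the set of such trees with $k$ internal (non-leaf) vertices. A tree $T$ is $p$-perfect if it contains a path $(v_0,\dots,v_p)$, with $v_i$ a child of $v_{i-1}$ for each $i$, such that each of the $(d-1)p$ siblings of $v_1,\dots,v_p$ is a leaf. *)

theory Defs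
  imports "HOL-Analysis.Analysis"
begin

datatype ptree = Leaf | Node "ptree list"

text \<open>d-Catalan tree: every vertex has 0 or d children (a Node with an empty child list
is not allowed, since leaves are represented by Leaf; d >= 2 in the theorem anyway).\<close>
fun dcatalan :: "nat \<Rightarrow> ptree \<Rightarrow> bool" where
  "dcatalan d Leaf = True"
| "dcatalan d (Node cs) = (length cs = d \<and> (\<forall>c\<in>set cs. dcatalan d c))"

fun internal :: "ptree \<Rightarrow> nat" where
  "internal Leaf = 0"
| "internal (Node cs) = Suc (sum_list (map internal cs))"

definition catalan_trees :: "nat \<Rightarrow> nat \<Rightarrow> ptree set" where
  "catalan_trees d k = {t. dcatalan d t \<and> internal t = k}"

fun subtrees :: "ptree \<Rightarrow> ptree set" where
  "subtrees Leaf = {Leaf}"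
| "subtrees (Node cs) = insert (Node cs) (\<Union>c\<in>set cs. subtrees c)"

fun perfect_path :: "nat \<Rightarrow> ptree \<Rightarrow> bool" where
  "perfect_path 0 t = True"
| "perfect_path (Suc q) Leaf = False"
| "perfect_path (Suc q) (Node cs) =
     (\<exists>i<length cs. perfect_path q (cs ! i) \<and> (\<forall>j<length cs. j \<noteq> i \<longrightarrow> cs ! j = Leaf))"

definition p_perfect :: "nat \<Rightarrow> ptree \<Rightarrow> bool" where
  "p_perfect p t = (\<exists>s\<in>subtrees t. perfect_path p s)"

end

theory Submission
  imports Defs
begin

(*
  Call the root of a tree branching if at least two of its children are internal vertices. A
  branching root starts no perfect path, and a tree that is not p-perfect has no p-perfect child.
  Given their sizes m_1, ..., m_d, the children are independent uniform trees, so by strong induction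
  on the size the probability that no child is p-perfect is at most the product of the bounds
  exp (- kappa (m_i - p)), i.e. exp (- kappa (n - 1 - d p)). A root with exactly one internal child
  hands the question to that child, with the required path shortened by one. After p steps,
    P (not p-perfect) <= exp (- kappa (n - p - d p)) * P (no perfect path of length p at the root).
  Grafting a tree with n - p internal vertices below one of the d^p spines of length p, together
  with the growth bound C (m + 1) <= e d C (m) read off the Fuss-Catalan formula, bounds the last
  probability by 1 - exp (- p); the choice of kappa makes exp (kappa d p) (1 - exp (- p)) <= 1.
*)

section \<open>Forests and the Fuss--Catalan count\<close>

definition forests :: "nat \<Rightarrow> nat \<Rightarrow> nat \<Rightarrow> ptree list set" where
  "forests d c n = {ts. length ts = c \<and> (\<forall>t\<in>set ts. dcatalan d t) \<and> sum_list (map internal ts) = n}"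

text \<open>The inverse of deleting the root of the first tree, whose \<open>d\<close> children take its place.\<close>

definition attach_root :: "nat \<Rightarrow> ptree list \<Rightarrow> ptree list" where
  "attach_root d ts = Node (take d ts) # drop d ts"

lemma forests_0: "forests d 0 n = (if n = 0 then {[]} else {})"
  by (auto simp: forests_def)

lemma forests_Suc:
  "forests d (Suc c) n = Cons Leaf ` forests d c n \<union>
     (if n = 0 then {} else attach_root d ` forests d (c + d) (n - 1))"
proof (intro equalityI subsetI)
  fix ts assume "ts \<in> forests d (Suc c) n"
  then obtain t us where ts: "ts = t # us" and "length us = c" and t: "dcatalan d t"
    and "\<forall>u\<in>set us. dcatalan d u" and n: "internal t + sum_list (map internal us) = n"
    by (cases ts) (auto simp: forests_def)
  show "ts \<in> Cons Leaf ` forests d c n \<union>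
     (if n = 0 then {} else attach_root d ` forests d (c + d) (n - 1))"
  proof (cases t)
    case Leaf
    then show ?thesis using ts \<open>length us = c\<close> \<open>\<forall>u\<in>set us. dcatalan d u\<close> n
      by (auto simp: forests_def)
  next
    case (Node cs)
    then have "cs @ us \<in> forests d (c + d) (n - 1)" and "ts = attach_root d (cs @ us)"
      using ts t n \<open>length us = c\<close> \<open>\<forall>u\<in>set us. dcatalan d u\<close>
      by (auto simp: forests_def attach_root_def)
    moreover have "n \<noteq> 0" using n Node by simp
    ultimately show ?thesis by simp
  qed
next
  fix ts assume "ts \<in> Cons Leaf ` forests d c n \<union>
     (if n = 0 then {} else attach_root d ` forests d (c + d) (n - 1))"
  then consider "ts \<in> Cons Leaf ` forests d c n"
    | us where "n \<noteq> 0" "us \<in> forests d (c + d) (n - 1)" "ts = attach_root d us"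
    by (auto split: if_splits)
  then show "ts \<in> forests d (Suc c) n"
  proof cases
    case (2 us)
    have "sum_list (map internal us) = sum_list (map internal (take d us)) + sum_list (map internal (drop d us))"
      by (metis append_take_drop_id map_append sum_list_append)
    then show ?thesis using 2
      by (auto simp: forests_def attach_root_def dest: in_set_takeD in_set_dropD)
  qed (auto simp: forests_def)
qed

lemma finite_forests: "finite (forests d c n)"
proof (induction n arbitrary: c rule: less_induct)
  case (less n)
  then show ?case
    by (induction c) (simp_all add: forests_0 forests_Suc)
qed

lemma card_forests_Suc:
  "card (forests d (Suc c) n) =
     card (forests d c n) + (if n = 0 then 0 else card (forests d (c + d) (n - 1)))"
proof -
  have "inj_on (Cons Leaf) A" and "inj_on (attach_root d) A" for A
    by (auto intro!: inj_onI simp: attach_root_def) (metis append_take_drop_id)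
  moreover have "Cons Leaf ` A \<inter> attach_root d ` B = {}" for A B
    by (auto simp: attach_root_def)
  ultimately show ?thesis
    by (simp add: forests_Suc card_Un_disjoint finite_forests card_image inj_on_subset)
qed

lemma card_forests_0: "card (forests d c 0) = 1"
  by (induction c) (simp_all add: forests_0 card_forests_Suc)

lemma Suc_diff_times_binomial_pred:
  assumes "n \<ge> 1"
  shows "(Suc M - n) * (M choose (n - 1)) = n * (M choose n)"
  using binomial_absorb_comp[of M "n - 1"] times_binomial_minus1_eq[of n M] assms
  by (simp add: Suc_diff_le)

lemma card_forests:
  assumes "d \<ge> 1"
  shows "real (card (forests d c n)) * real (d * n + c) = real c * real ((d * n + c) choose n)"
proof (induction n arbitrary: c rule: less_induct)
  case (less n)
  show ?case
  proof (cases "n = 0")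
    case True
    then show ?thesis by (simp add: card_forests_0)
  next
    case False
    then have "n \<ge> 1" by simp
    show ?thesis
    proof (induction c)
      case (Suc c)
      define M where "M = d * n + c"
      have "n \<le> d * n" using \<open>d \<ge> 1\<close> by (metis mult_1 mult_le_mono1)
      then have "n \<le> M" unfolding M_def by (rule trans_le_add1)
      have IH1: "real (card (forests d c n)) * real M = real c * real (M choose n)"
        using Suc by (simp add: M_def)
      have "d * (n - 1) + (c + d) = M" using False by (cases n) (simp_all add: M_def)
      then have IH2: "real (card (forests d (c + d) (n - 1))) * real M
          = (real c + real d) * real (M choose (n - 1))"
        using less[of "n - 1" "c + d"] False by simp
      have B1: "real (Suc M - n) * real (M choose (n - 1)) = real n * real (M choose n)"
        using Suc_diff_times_binomial_pred[OF \<open>n \<ge> 1\<close>, of M] by (metis of_nat_mult)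
      have "real ((Suc M - n) * (Suc M choose n)) = real (Suc M * (M choose n))"
        using binomial_absorb_comp[of "Suc M" n] by simp
      then have B2: "real (Suc M - n) * real (Suc M choose n) = (real M + 1) * real (M choose n)"
        by (simp only: of_nat_mult of_nat_Suc add.commute)
      have "real (Suc M - n) + real n = real M + 1" and "real M = real d * real n + real c"
        using \<open>n \<le> M\<close> by (simp_all add: M_def)
      then have "(real (card (forests d c n)) + real (card (forests d (c + d) (n - 1))))
            * (real M + 1) * (real M * real (Suc M - n))
          = (real c + 1) * real (Suc M choose n) * (real M * real (Suc M - n))"
        using IH1 IH2 B1 B2 by algebra
      moreover have "real M * real (Suc M - n) \<noteq> 0"
        using \<open>n \<le> M\<close> \<open>n \<ge> 1\<close> by simp
      ultimately show ?case using False by (simp add: card_forests_Suc M_def add.commute)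
    qed (use False in \<open>simp add: forests_0\<close>)
  qed
qed

lemma catalan_trees_eq_forests: "catalan_trees d k = hd ` forests d 1 k"
proof (intro equalityI subsetI)
  fix t assume "t \<in> catalan_trees d k"
  then have "[t] \<in> forests d 1 k" by (simp add: catalan_trees_def forests_def)
  then show "t \<in> hd ` forests d 1 k" by (metis image_eqI list.sel(1))
qed (auto simp: catalan_trees_def forests_def length_Suc_conv)

lemma finite_catalan_trees: "finite (catalan_trees d k)"
  by (simp add: catalan_trees_eq_forests finite_forests)

lemma card_catalan_trees:
  assumes "d \<ge> 1"
  shows "real (card (catalan_trees d k)) * real (d * k + 1) = real ((d * k + 1) choose k)"
proof -
  have "inj_on hd (forests d 1 k)"
    by (rule inj_onI) (auto simp: forests_def length_Suc_conv)
  then show ?thesis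
    using card_forests[OF assms, of 1 k] by (simp add: catalan_trees_eq_forests card_image)
qed

section \<open>Growth of the Fuss--Catalan numbers\<close>

lemma card_catalan_trees_Suc:
  assumes "d \<ge> 1"
  shows "real (card (catalan_trees d (Suc m))) * real (Suc m) = real ((d * m + d) choose m)"
proof -
  let ?N = "Suc (d * m + d)"
  have "real (Suc m) * real (?N choose Suc m) = real ?N * real ((d * m + d) choose m)"
    by (simp only: of_nat_mult[symmetric] Suc_times_binomial)
  moreover have "d * Suc m + 1 = ?N" by simp
  then have "real (card (catalan_trees d (Suc m))) * real ?N = real (?N choose Suc m)"
    using card_catalan_trees[OF assms, of "Suc m"] by (simp only:)
  ultimately have "real ?N * (real (card (catalan_trees d (Suc m))) * real (Suc m))
      = real ?N * real ((d * m + d) choose m)"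
    by (simp add: mult_ac)
  moreover have "real ?N \<noteq> 0" by (simp only: of_nat_eq_0_iff)
  ultimately show ?thesis using mult_left_cancel by blast
qed

lemma binomial_Suc_le:
  assumes "d \<ge> 2" and "d * m \<le> Suc a"
  shows "real (Suc a choose m) \<le> real d / (real d - 1) * real (a choose m)"
proof -
  have "2 * m \<le> d * m" using assms(1) by (rule mult_le_mono1)
  then have "m \<le> a" using assms(2) by linarith
  have "(Suc a - m) * (Suc a choose m) = Suc a * (a choose m)"
    using binomial_absorb_comp[of "Suc a" m] by simp
  then have eq: "real (Suc a - m) * real (Suc a choose m) = real (Suc a) * real (a choose m)"
    by (metis of_nat_mult)
  have "real (Suc a) * (real d - 1) \<le> real d * real (Suc a - m)"
    using \<open>m \<le> a\<close> of_nat_mono[OF assms(2)] by (simp add: of_nat_diff algebra_simps)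
  then have "real (Suc a) \<le> real d / (real d - 1) * real (Suc a - m)"
    using assms(1) by (simp add: field_simps)
  from mult_right_mono[OF this, of "real (a choose m)"]
  have "real (Suc a - m) * real (Suc a choose m)
      \<le> real (Suc a - m) * (real d / (real d - 1) * real (a choose m))"
    unfolding eq by (simp add: mult_ac)
  moreover have "real (Suc a - m) > 0" using \<open>m \<le> a\<close> by simp
  ultimately show ?thesis by (rule mult_left_le_imp_le)
qed

lemma binomial_add_le:
  assumes "d \<ge> 2"
  shows "real ((d * m + 1 + t) choose m) \<le> (real d / (real d - 1)) ^ t * real ((d * m + 1) choose m)"
proof (induction t)
  case (Suc t)
  have "real (Suc (d * m + 1 + t) choose m) \<le> real d / (real d - 1) * real ((d * m + 1 + t) choose m)"
    by (rule binomial_Suc_le[OF assms]) simp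
  also have "\<dots> \<le> real d / (real d - 1) * ((real d / (real d - 1)) ^ t * real ((d * m + 1) choose m))"
    using Suc assms by (intro mult_left_mono) simp_all
  finally show ?case by (simp add: algebra_simps)
qed simp

lemma power_divide_pred_le_exp:
  assumes "d \<ge> 2"
  shows "(real d / (real d - 1)) ^ (d - 1) \<le> exp 1"
proof -
  have "real d / (real d - 1) = 1 + 1 / (real d - 1)" using assms by (simp add: field_simps)
  also have "\<dots> \<le> exp (1 / (real d - 1))" by (rule exp_ge_add_one_self)
  finally have "(real d / (real d - 1)) ^ (d - 1) \<le> exp (1 / (real d - 1)) ^ (d - 1)"
    using assms by (intro power_mono) simp_all
  also have "\<dots> = exp (real (d - 1) * (1 / (real d - 1)))" by (rule exp_of_nat_mult[symmetric])
  also have "real (d - 1) * (1 / (real d - 1)) = 1" using assms by (simp add: of_nat_diff)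
  finally show ?thesis by simp
qed

lemma card_catalan_trees_Suc_le:
  assumes "d \<ge> 2"
  shows "real (card (catalan_trees d (Suc m))) \<le> exp 1 * real d * real (card (catalan_trees d m))"
proof -
  have "real (card (catalan_trees d (Suc m))) * real (Suc m) = real ((d * m + 1 + (d - 1)) choose m)"
    using card_catalan_trees_Suc[of d m] assms by simp
  also have "\<dots> \<le> exp 1 * real ((d * m + 1) choose m)"
    using binomial_add_le[OF assms, of m "d - 1"]
      mult_right_mono[OF power_divide_pred_le_exp[OF assms], of "real ((d * m + 1) choose m)"]
    by simp
  also have "\<dots> = exp 1 * (real (card (catalan_trees d m)) * real (d * m + 1))"
    using card_catalan_trees[of d m] assms by simp
  also have "\<dots> \<le> exp 1 * (real (card (catalan_trees d m)) * (real d * real (Suc m)))"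
    using assms by (intro mult_left_mono) (simp_all add: algebra_simps)
  finally have "real (card (catalan_trees d (Suc m))) * real (Suc m)
      \<le> (exp 1 * real d * real (card (catalan_trees d m))) * real (Suc m)"
    by (simp add: mult_ac)
  then show ?thesis by (simp add: mult_le_cancel_right_pos)
qed

lemma card_catalan_trees_add_le:
  assumes "d \<ge> 2"
  shows "real (card (catalan_trees d (m + j))) \<le> (exp 1 * real d) ^ j * real (card (catalan_trees d m))"
proof (induction j)
  case (Suc j)
  have "real (card (catalan_trees d (m + Suc j))) \<le> exp 1 * real d * real (card (catalan_trees d (m + j)))"
    using card_catalan_trees_Suc_le[OF assms, of "m + j"] by simp
  also have "\<dots> \<le> exp 1 * real d * ((exp 1 * real d) ^ j * real (card (catalan_trees d m)))"
    using Suc by (intro mult_left_mono) simp_all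
  finally show ?case by (simp add: algebra_simps)
qed simp

section \<open>Spines and perfect paths\<close>

lemma catalan_tree_not_Leaf: "t \<in> catalan_trees d n \<Longrightarrow> n \<ge> 1 \<Longrightarrow> t \<noteq> Leaf"
  by (auto simp: catalan_trees_def)

lemma catalan_trees_Suc: "catalan_trees d (Suc n) = Node ` forests d d n"
proof (intro equalityI subsetI)
  fix t assume "t \<in> catalan_trees d (Suc n)"
  then show "t \<in> Node ` forests d d n"
    by (cases t) (auto simp: catalan_trees_def forests_def)
qed (auto simp: catalan_trees_def forests_def)

definition spine :: "nat \<Rightarrow> nat \<Rightarrow> ptree \<Rightarrow> ptree" where
  "spine d i c = Node ((replicate d Leaf)[i := c])"

lemma spine_in_catalan_trees_iff:
  assumes "i < d"
  shows "spine d i c \<in> catalan_trees d (Suc n) \<longleftrightarrow> c \<in> catalan_trees d n"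
proof -
  have "(\<forall>u\<in>set ((replicate d Leaf)[i := c]). dcatalan d u) \<longleftrightarrow> dcatalan d c"
    using assms set_update_subset_insert[of "replicate d Leaf" i c] set_update_memI[of i "replicate d Leaf" c]
    by auto
  moreover have "sum_list (map internal ((replicate d Leaf)[i := c])) = internal c"
    using assms by (simp add: map_update sum_list_update)
  ultimately show ?thesis
    using assms by (simp add: spine_def catalan_trees_def)
qed

lemma spine_inject:
  assumes "i < d" and "i' < d" and "c \<noteq> Leaf" and "spine d i c = spine d i' c'"
  shows "i = i'" and "c = c'"
proof -
  have eq: "(replicate d Leaf)[i := c] ! j = (replicate d Leaf)[i' := c'] ! j" for j
    using assms(4) by (simp add: spine_def)
  show "i = i'"
    using eq[of i] assms(1-3) by (auto simp: nth_list_update split: if_splits)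
  then show "c = c'"
    using eq[of i] assms(1) by simp
qed

lemma perfect_path_spine_iff:
  assumes "i < d" and "c \<noteq> Leaf"
  shows "perfect_path (Suc q) (spine d i c) \<longleftrightarrow> perfect_path q c"
proof
  assume "perfect_path (Suc q) (spine d i c)"
  then obtain j where "j < d" and "perfect_path q ((replicate d Leaf)[i := c] ! j)"
    and others: "\<forall>k<d. k \<noteq> j \<longrightarrow> (replicate d Leaf)[i := c] ! k = Leaf"
    by (auto simp: spine_def)
  moreover have "j = i" using others assms by force
  ultimately show "perfect_path q c" using assms by simp
next
  assume "perfect_path q c"
  then show "perfect_path (Suc q) (spine d i c)"
    using assms by (auto simp: spine_def nth_list_update intro!: exI[of _ i])
qed

lemma p_perfect_Node_child: "c \<in> set cs \<Longrightarrow> p_perfect p c \<Longrightarrow> p_perfect p (Node cs)"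
  by (auto simp: p_perfect_def)

lemma perfect_path_imp_p_perfect: "perfect_path p t \<Longrightarrow> p_perfect p t"
proof -
  have "t \<in> subtrees t" by (cases t) auto
  then show "perfect_path p t \<Longrightarrow> p_perfect p t" by (auto simp: p_perfect_def)
qed

lemma foldr_spine_in_catalan_trees:
  assumes "set ks \<subseteq> {..<d}" and "c \<in> catalan_trees d m" and "m \<ge> 1"
  shows "foldr (spine d) ks c \<in> catalan_trees d (length ks + m)
    \<and> perfect_path (length ks) (foldr (spine d) ks c)"
  using assms(1)
proof (induction ks)
  case (Cons i ks)
  then have "i < d" and IH: "foldr (spine d) ks c \<in> catalan_trees d (length ks + m)"
      "perfect_path (length ks) (foldr (spine d) ks c)"
    by simp_all
  moreover have "foldr (spine d) ks c \<noteq> Leaf"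
    using IH(1) \<open>m \<ge> 1\<close> by (simp add: catalan_tree_not_Leaf)
  ultimately show ?case
    by (simp add: spine_in_catalan_trees_iff perfect_path_spine_iff)
qed (use assms(2) in simp)

lemma foldr_spine_inject:
  assumes "set ks \<subseteq> {..<d}" and "set ks' \<subseteq> {..<d}" and "length ks = length ks'"
    and "c \<noteq> Leaf" and "foldr (spine d) ks c = foldr (spine d) ks' c'"
  shows "ks = ks' \<and> c = c'"
  using assms
proof (induction ks arbitrary: ks')
  case (Cons i ks)
  then obtain i' js where ks': "ks' = i' # js" by (cases ks') auto
  have "foldr (spine d) ks c \<noteq> Leaf"
    using \<open>c \<noteq> Leaf\<close> by (cases ks) (auto simp: spine_def)
  moreover have "spine d i (foldr (spine d) ks c) = spine d i' (foldr (spine d) js c')"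
    using Cons.prems(5) ks' by simp
  moreover have "i < d" and "i' < d" using Cons.prems(1,2) ks' by auto
  ultimately have "i = i'" and "foldr (spine d) ks c = foldr (spine d) js c'"
    using spine_inject by blast+
  then show ?case using Cons ks' by auto
qed simp

lemma card_perfect_path_ge:
  assumes "m \<ge> 1"
  shows "d ^ p * card (catalan_trees d m) \<le> card {t \<in> catalan_trees d (p + m). perfect_path p t}"
proof -
  let ?D = "{ks. set ks \<subseteq> {..<d} \<and> length ks = p} \<times> catalan_trees d m"
  let ?f = "\<lambda>(ks, c). foldr (spine d) ks c"
  have "inj_on ?f ?D"
  proof (rule inj_onI)
    fix x y assume "x \<in> ?D" "y \<in> ?D" "?f x = ?f y"
    moreover obtain ks c ks' c' where "x = (ks, c)" "y = (ks', c')" by fastforce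
    moreover have "c \<noteq> Leaf"
      using \<open>x \<in> ?D\<close> \<open>x = (ks, c)\<close> assms by (auto dest: catalan_tree_not_Leaf)
    ultimately show "x = y"
      using foldr_spine_inject[of ks d ks' c c'] by auto
  qed
  moreover have "?f ` ?D \<subseteq> {t \<in> catalan_trees d (p + m). perfect_path p t}"
    using foldr_spine_in_catalan_trees[of _ d _ m] assms by auto
  ultimately have "card ?D \<le> card {t \<in> catalan_trees d (p + m). perfect_path p t}"
    by (rule card_inj_on_le) (simp add: finite_catalan_trees)
  then show ?thesis
    by (simp add: card_cartesian_product card_lists_length_eq)
qed

lemma card_not_perfect_path_le:
  assumes "d \<ge> 2" and "p < N"
  shows "real (card {t \<in> catalan_trees d N. \<not> perfect_path p t})
    \<le> (1 - exp (- real p)) * real (card (catalan_trees d N))"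
proof -
  have "real (card (catalan_trees d N)) \<le> (exp 1 * real d) ^ p * real (card (catalan_trees d (N - p)))"
    using card_catalan_trees_add_le[OF assms(1), of "N - p" p] assms(2) by simp
  also have "\<dots> = exp (real p) * real (d ^ p * card (catalan_trees d (N - p)))"
    by (simp add: power_mult_distrib exp_of_nat_mult[symmetric])
  also have "\<dots> \<le> exp (real p) * real (card {t \<in> catalan_trees d N. perfect_path p t})"
    using card_perfect_path_ge[of "N - p" d p] assms(2)
    by (intro mult_left_mono of_nat_mono) simp_all
  finally have "exp (- real p) * real (card (catalan_trees d N))
      \<le> real (card {t \<in> catalan_trees d N. perfect_path p t})"
    by (simp add: exp_minus field_simps)
  moreover have "{t \<in> catalan_trees d N. \<not> perfect_path p t}
      = catalan_trees d N - {t \<in> catalan_trees d N. perfect_path p t}"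
    by blast
  then have "real (card {t \<in> catalan_trees d N. \<not> perfect_path p t})
      = real (card (catalan_trees d N)) - real (card {t \<in> catalan_trees d N. perfect_path p t})"
    by (simp add: card_Diff_subset finite_catalan_trees of_nat_diff card_mono)
  ultimately show ?thesis by (simp add: algebra_simps)
qed
section \<open>Forests of trees that are not \<open>p\<close>-perfect\<close>

lemma card_forests_Suc_split:
  "card {cs \<in> forests d (Suc c) n. B (hd cs) \<and> Q (internal (hd cs)) (tl cs)}
   = (\<Sum>m\<le>n. card {t \<in> catalan_trees d m. B t} * card {ts \<in> forests d c (n - m). Q m ts})"
proof -
  let ?S = "\<lambda>m. {t \<in> catalan_trees d m. B t} \<times> {ts \<in> forests d c (n - m). Q m ts}"
  have "{cs \<in> forests d (Suc c) n. B (hd cs) \<and> Q (internal (hd cs)) (tl cs)}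
      = (\<Union>m\<le>n. case_prod Cons ` ?S m)"
  proof (intro equalityI subsetI)
    fix cs assume "cs \<in> {cs \<in> forests d (Suc c) n. B (hd cs) \<and> Q (internal (hd cs)) (tl cs)}"
    then obtain t ts where "cs = t # ts" and "(t, ts) \<in> ?S (internal t)" and "internal t \<le> n"
      by (cases cs) (auto simp: forests_def catalan_trees_def)
    then show "cs \<in> (\<Union>m\<le>n. case_prod Cons ` ?S m)" by force
  qed (auto simp: catalan_trees_def forests_def)
  moreover have "finite (?S m)" for m
    by (auto intro: finite_cartesian_product finite_subset[OF _ finite_catalan_trees]
        finite_subset[OF _ finite_forests])
  moreover have "case_prod Cons ` ?S m \<inter> case_prod Cons ` ?S m' = {}" if "m \<noteq> m'" for m m'
    using that by (auto simp: catalan_trees_def)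
  moreover have "inj_on (case_prod Cons) (?S m)" for m
    by (auto simp: inj_on_def)
  ultimately show ?thesis
    by (simp add: card_UN_disjoint card_image card_cartesian_product)
qed

text \<open>Once the size profile \<open>map internal cs\<close> is fixed, the trees of a forest vary
  independently, so the bounds for the single trees multiply; \<open>P\<close> selects the admissible profiles.\<close>

lemma card_forests_all_le:
  assumes "\<forall>m\<le>n. real (card {t \<in> catalan_trees d m. Q t})
      \<le> exp (- \<kappa> * (real m - a)) * real (card (catalan_trees d m))"
  shows "real (card {cs \<in> forests d c n. P (map internal cs) \<and> (\<forall>t\<in>set cs. Q t)})
      \<le> exp (- \<kappa> * (real n - real c * a)) * real (card {cs \<in> forests d c n. P (map internal cs)})"
  using assms
proof (induction c arbitrary: n P)
  case 0
  show ?case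
  proof (cases "n = 0")
    case True
    then have "{cs \<in> forests d 0 n. P (map internal cs) \<and> (\<forall>t\<in>set cs. Q t)}
        = {cs \<in> forests d 0 n. P (map internal cs)}"
      by (auto simp: forests_0)
    then show ?thesis using True by simp
  qed (simp add: forests_0)
next
  case (Suc c)
  let ?A = "\<lambda>m. card {t \<in> catalan_trees d m. Q t}"
  let ?C = "\<lambda>m. card (catalan_trees d m)"
  let ?X = "\<lambda>m. card {ts \<in> forests d c (n - m). P (m # map internal ts) \<and> (\<forall>t\<in>set ts. Q t)}"
  let ?Y = "\<lambda>m. card {ts \<in> forests d c (n - m). P (m # map internal ts)}"
  have "P (map internal cs) \<and> (\<forall>t\<in>set cs. Q t) \<longleftrightarrow>
      Q (hd cs) \<and> P (internal (hd cs) # map internal (tl cs)) \<and> (\<forall>t\<in>set (tl cs). Q t)"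
    "P (map internal cs) \<longleftrightarrow> True \<and> P (internal (hd cs) # map internal (tl cs))"
    if "cs \<in> forests d (Suc c) n" for cs
    using that by (cases cs; auto simp: forests_def)+
  then have eqs: "{cs \<in> forests d (Suc c) n. P (map internal cs) \<and> (\<forall>t\<in>set cs. Q t)}
      = {cs \<in> forests d (Suc c) n. Q (hd cs) \<and>
          (\<lambda>m ts. P (m # map internal ts) \<and> (\<forall>t\<in>set ts. Q t)) (internal (hd cs)) (tl cs)}"
    "{cs \<in> forests d (Suc c) n. P (map internal cs)}
      = {cs \<in> forests d (Suc c) n. True \<and> (\<lambda>m ts. P (m # map internal ts)) (internal (hd cs)) (tl cs)}"
    by blast+
  have X: "card {cs \<in> forests d (Suc c) n. P (map internal cs) \<and> (\<forall>t\<in>set cs. Q t)}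
      = (\<Sum>m\<le>n. ?A m * ?X m)"
    unfolding eqs(1)
    by (rule card_forests_Suc_split[of d c n Q "\<lambda>m ts. P (m # map internal ts) \<and> (\<forall>t\<in>set ts. Q t)"])
  have Y: "card {cs \<in> forests d (Suc c) n. P (map internal cs)} = (\<Sum>m\<le>n. ?C m * ?Y m)"
    unfolding eqs(2) using card_forests_Suc_split[of d c n "\<lambda>_. True" "\<lambda>m ts. P (m # map internal ts)"]
    by simp
  have "real (?A m * ?X m) \<le> exp (- \<kappa> * (real n - real (Suc c) * a)) * real (?C m * ?Y m)"
    if "m \<le> n" for m
  proof -
    have "real (?A m * ?X m)
        \<le> (exp (- \<kappa> * (real m - a)) * real (?C m)) * (exp (- \<kappa> * (real (n - m) - real c * a)) * real (?Y m))"
      unfolding of_nat_mult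
      using Suc.IH[of "n - m" "\<lambda>\<sigma>. P (m # \<sigma>)"] Suc.prems that
      by (intro mult_mono) auto
    also have "\<dots> = exp (- \<kappa> * (real n - real (Suc c) * a)) * real (?C m * ?Y m)"
      using that by (simp add: mult_exp_exp of_nat_diff algebra_simps)
    finally show ?thesis .
  qed
  then have "(\<Sum>m\<le>n. real (?A m * ?X m))
      \<le> (\<Sum>m\<le>n. exp (- \<kappa> * (real n - real (Suc c) * a)) * real (?C m * ?Y m))"
    by (intro sum_mono) simp
  then show ?case
    unfolding X Y by (simp add: sum_distrib_left)
qed

section \<open>Decomposition at the root\<close>

lemma length_filter_le_1:
  assumes "\<And>j. j < length xs \<Longrightarrow> j \<noteq> i \<Longrightarrow> \<not> P (xs ! j)"
  shows "length (filter P xs) \<le> 1"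
proof -
  have "{j. j < length xs \<and> P (xs ! j)} \<subseteq> {i}" using assms by blast
  then have "card {j. j < length xs \<and> P (xs ! j)} \<le> 1"
    using card_mono[of "{i}"] by fastforce
  then show ?thesis by (simp add: length_filter_conv_card)
qed

definition branching :: "ptree list \<Rightarrow> bool" where
  "branching cs \<longleftrightarrow> 2 \<le> length (filter (\<lambda>c. c \<noteq> Leaf) cs)"

lemma branching_iff_internal: "branching cs \<longleftrightarrow> 2 \<le> length (filter (\<lambda>m. m \<noteq> 0) (map internal cs))"
proof -
  have "(\<lambda>m. m \<noteq> 0) \<circ> internal = (\<lambda>c. c \<noteq> Leaf)"
  proof
    fix c show "((\<lambda>m. m \<noteq> 0) \<circ> internal) c = (c \<noteq> Leaf)" by (cases c) auto
  qed
  then show ?thesis by (simp add: branching_def length_filter_map)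
qed

lemma branching_not_perfect_path:
  assumes "branching cs"
  shows "\<not> perfect_path (Suc q) (Node cs)"
proof
  assume "perfect_path (Suc q) (Node cs)"
  then obtain i where "\<forall>j<length cs. j \<noteq> i \<longrightarrow> cs ! j = Leaf" by auto
  then have "length (filter (\<lambda>c. c \<noteq> Leaf) cs) \<le> 1" by (intro length_filter_le_1) auto
  with assms show False by (simp add: branching_def)
qed

lemma not_branching_replicate_update: "\<not> branching ((replicate d Leaf)[i := c])"
  using length_filter_le_1[of "(replicate d Leaf)[i := c]" i "\<lambda>c. c \<noteq> Leaf"]
  by (simp add: branching_def nth_list_update)

lemma not_branching_imp_spine:
  assumes "cs \<in> forests d d n" and "n \<ge> 1" and "\<not> branching cs"
  obtains i where "i < d" and "Node cs = spine d i (cs ! i)"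
proof -
  let ?J = "{j. j < length cs \<and> cs ! j \<noteq> Leaf}"
  have "card ?J \<le> 1" using assms(3) by (simp add: branching_def length_filter_conv_card)
  moreover have "?J \<noteq> {}"
  proof
    assume "?J = {}"
    then have "\<forall>c\<in>set cs. internal c = 0" by (auto simp: in_set_conv_nth)
    then have "sum_list (map internal cs) = 0" by simp
    moreover have "sum_list (map internal cs) = n" using assms(1) by (simp add: forests_def)
    ultimately show False using assms(2) by simp
  qed
  ultimately have "card ?J = 1"
    by (metis One_nat_def card_0_eq finite_Collect_conjI finite_Collect_less_nat le_SucE le_zero_eq)
  then obtain i where J: "?J = {i}" by (rule card_1_singletonE)
  have "cs ! j = Leaf" if "j < length cs" and "j \<noteq> i" for j
    using J that by blast
  moreover have "length cs = d" using assms(1) by (simp add: forests_def)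
  moreover have "i < length cs" using J by blast
  ultimately have "cs = (replicate d Leaf)[i := cs ! i]"
    by (intro nth_equalityI) (auto simp: nth_list_update)
  then show ?thesis using that J assms(1) by (auto simp: spine_def forests_def)
qed

lemma catalan_trees_Suc_eq_branching_Un_spines:
  assumes "n \<ge> 1"
  shows "catalan_trees d (Suc n)
    = Node ` {cs \<in> forests d d n. branching cs} \<union> case_prod (spine d) ` ({..<d} \<times> catalan_trees d n)"
proof (intro equalityI subsetI)
  fix t assume t: "t \<in> catalan_trees d (Suc n)"
  then obtain cs where cs: "t = Node cs" "cs \<in> forests d d n" by (auto simp: catalan_trees_Suc)
  show "t \<in> Node ` {cs \<in> forests d d n. branching cs} \<union> case_prod (spine d) ` ({..<d} \<times> catalan_trees d n)"
  proof (cases "branching cs")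
    case False
    obtain i where "i < d" and "t = spine d i (cs ! i)"
      using not_branching_imp_spine[OF cs(2) assms False] cs(1) by metis
    moreover from this t have "cs ! i \<in> catalan_trees d n" by (simp add: spine_in_catalan_trees_iff)
    ultimately show ?thesis by auto
  qed (use cs in auto)
next
  fix t assume "t \<in> Node ` {cs \<in> forests d d n. branching cs} \<union> case_prod (spine d) ` ({..<d} \<times> catalan_trees d n)"
  then show "t \<in> catalan_trees d (Suc n)"
    by (auto simp: spine_in_catalan_trees_iff) (auto simp: catalan_trees_Suc)
qed

lemma inj_on_spine: "n \<ge> 1 \<Longrightarrow> inj_on (case_prod (spine d)) ({..<d} \<times> catalan_trees d n)"
  by (rule inj_onI) (auto dest: catalan_tree_not_Leaf spine_inject)

lemma card_catalan_trees_Suc_split: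
  assumes "n \<ge> 1"
  shows "card {t \<in> catalan_trees d (Suc n). R t}
    = card {cs \<in> forests d d n. branching cs \<and> R (Node cs)}
      + card {(i, c). i < d \<and> c \<in> catalan_trees d n \<and> R (spine d i c)}"
proof -
  let ?B = "{cs \<in> forests d d n. branching cs \<and> R (Node cs)}"
  let ?S = "{(i, c). i < d \<and> c \<in> catalan_trees d n \<and> R (spine d i c)}"
  have "{t \<in> catalan_trees d (Suc n). R t} = Node ` ?B \<union> case_prod (spine d) ` ?S"
    unfolding catalan_trees_Suc_eq_branching_Un_spines[OF assms] by auto
  moreover have "Node ` ?B \<inter> case_prod (spine d) ` ?S = {}"
    using not_branching_replicate_update by (auto simp: spine_def)
  moreover have "inj_on (case_prod (spine d)) ?S"
    by (rule inj_on_subset[OF inj_on_spine[OF assms]]) auto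
  moreover have "inj_on Node ?B" by (simp add: inj_on_def)
  moreover have "finite ?B" by (simp add: finite_forests)
  moreover have "finite ?S"
    by (rule finite_subset[of _ "{..<d} \<times> catalan_trees d n"]) (auto simp: finite_catalan_trees)
  ultimately show ?thesis
    by (simp add: card_Un_disjoint card_image)
qed

lemma card_branching_not_p_perfect_le:
  assumes "\<forall>m\<le>n. real (card {t \<in> catalan_trees d m. \<not> p_perfect p t})
      \<le> exp (- \<kappa> * (real m - real p)) * real (card (catalan_trees d m))"
  shows "real (card {cs \<in> forests d d n. branching cs \<and> \<not> p_perfect p (Node cs)})
      \<le> exp (- \<kappa> * (real n - real d * real p)) * real (card {cs \<in> forests d d n. branching cs})"
proof -
  let ?P = "\<lambda>\<sigma>. 2 \<le> length (filter (\<lambda>m. m \<noteq> 0) \<sigma>)"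
  have "card {cs \<in> forests d d n. branching cs \<and> \<not> p_perfect p (Node cs)}
      \<le> card {cs \<in> forests d d n. ?P (map internal cs) \<and> (\<forall>t\<in>set cs. \<not> p_perfect p t)}"
    using p_perfect_Node_child
    by (intro card_mono) (auto simp: finite_forests branching_iff_internal)
  then have "real (card {cs \<in> forests d d n. branching cs \<and> \<not> p_perfect p (Node cs)})
      \<le> real (card {cs \<in> forests d d n. ?P (map internal cs) \<and> (\<forall>t\<in>set cs. \<not> p_perfect p t)})"
    by (rule of_nat_mono)
  also have "real (card {cs \<in> forests d d n. ?P (map internal cs) \<and> (\<forall>t\<in>set cs. \<not> p_perfect p t)})
      \<le> exp (- \<kappa> * (real n - real d * real p)) * real (card {cs \<in> forests d d n. ?P (map internal cs)})"
    by (rule card_forests_all_le[OF assms])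
  finally show ?thesis by (simp add: branching_iff_internal)
qed

lemma card_spines_not_perfect_path:
  assumes "n \<ge> 1"
  shows "card {(i, c). i < d \<and> c \<in> catalan_trees d n \<and> \<not> perfect_path (Suc q) (spine d i c)}
    = d * card {c \<in> catalan_trees d n. \<not> perfect_path q c}"
proof -
  have "{(i, c). i < d \<and> c \<in> catalan_trees d n \<and> \<not> perfect_path (Suc q) (spine d i c)}
      = {..<d} \<times> {c \<in> catalan_trees d n. \<not> perfect_path q c}"
    using assms by (auto simp: perfect_path_spine_iff dest: catalan_tree_not_Leaf)
  then show ?thesis by (simp add: card_cartesian_product)
qed

lemma card_spines_not_p_perfect_le:
  assumes "n \<ge> 1"
  shows "card {(i, c). i < d \<and> c \<in> catalan_trees d n \<and>
      \<not> p_perfect p (spine d i c) \<and> \<not> perfect_path (Suc q) (spine d i c)}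
    \<le> d * card {c \<in> catalan_trees d n. \<not> p_perfect p c \<and> \<not> perfect_path q c}"
proof -
  have "(i, c) \<in> {..<d} \<times> {c \<in> catalan_trees d n. \<not> p_perfect p c \<and> \<not> perfect_path q c}"
    if "i < d" "c \<in> catalan_trees d n" "\<not> p_perfect p (spine d i c)"
      "\<not> perfect_path (Suc q) (spine d i c)" for i c
  proof -
    have "c \<noteq> Leaf" using that(2) assms by (rule catalan_tree_not_Leaf)
    moreover have "\<not> p_perfect p c"
      using that(1,3) p_perfect_Node_child[of c "(replicate d Leaf)[i := c]" p]
      by (auto simp: spine_def set_update_memI)
    ultimately show ?thesis using that by (simp add: perfect_path_spine_iff)
  qed
  then have "{(i, c). i < d \<and> c \<in> catalan_trees d n \<and>
        \<not> p_perfect p (spine d i c) \<and> \<not> perfect_path (Suc q) (spine d i c)}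
      \<subseteq> {..<d} \<times> {c \<in> catalan_trees d n. \<not> p_perfect p c \<and> \<not> perfect_path q c}"
    by auto
  then show ?thesis
    by (auto dest!: card_mono[rotated] simp: card_cartesian_product finite_catalan_trees)
qed

lemma card_not_p_perfect_not_perfect_path_Suc_le:
  assumes "n \<ge> 1"
    and branching: "real (card {cs \<in> forests d d n. branching cs \<and> \<not> p_perfect p (Node cs)})
      \<le> \<rho> * real (card {cs \<in> forests d d n. branching cs})"
    and child: "real (card {c \<in> catalan_trees d n. \<not> p_perfect p c \<and> \<not> perfect_path q c})
      \<le> \<rho> * real (card {c \<in> catalan_trees d n. \<not> perfect_path q c})"
  shows "real (card {t \<in> catalan_trees d (Suc n). \<not> p_perfect p t \<and> \<not> perfect_path (Suc q) t})
    \<le> \<rho> * real (card {t \<in> catalan_trees d (Suc n). \<not> perfect_path (Suc q) t})"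
proof -
  let ?Xs = "{(i, c). i < d \<and> c \<in> catalan_trees d n \<and>
    \<not> p_perfect p (spine d i c) \<and> \<not> perfect_path (Suc q) (spine d i c)}"
  let ?Ys = "{(i, c). i < d \<and> c \<in> catalan_trees d n \<and> \<not> perfect_path (Suc q) (spine d i c)}"
  have "real (card ?Xs)
      \<le> real d * real (card {c \<in> catalan_trees d n. \<not> p_perfect p c \<and> \<not> perfect_path q c})"
    using of_nat_mono[OF card_spines_not_p_perfect_le[OF assms(1), of d p q]] by simp
  also have "\<dots> \<le> real d * (\<rho> * real (card {c \<in> catalan_trees d n. \<not> perfect_path q c}))"
    using child by (rule mult_left_mono) simp
  also have "\<dots> = \<rho> * real (card ?Ys)"
    by (simp add: card_spines_not_perfect_path[OF assms(1)])
  finally have spines: "real (card ?Xs) \<le> \<rho> * real (card ?Ys)" .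
  have "{cs \<in> forests d d n. branching cs \<and> \<not> p_perfect p (Node cs) \<and> \<not> perfect_path (Suc q) (Node cs)}
      = {cs \<in> forests d d n. branching cs \<and> \<not> p_perfect p (Node cs)}"
    "{cs \<in> forests d d n. branching cs \<and> \<not> perfect_path (Suc q) (Node cs)}
      = {cs \<in> forests d d n. branching cs}"
    using branching_not_perfect_path by blast+
  then have X: "card {t \<in> catalan_trees d (Suc n). \<not> p_perfect p t \<and> \<not> perfect_path (Suc q) t}
      = card {cs \<in> forests d d n. branching cs \<and> \<not> p_perfect p (Node cs)} + card ?Xs"
    and Y: "card {t \<in> catalan_trees d (Suc n). \<not> perfect_path (Suc q) t}
      = card {cs \<in> forests d d n. branching cs} + card ?Ys"
    by (simp_all only: card_catalan_trees_Suc_split[OF assms(1)])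
  show ?thesis
    unfolding X Y of_nat_add distrib_left by (rule add_mono[OF branching spines])
qed

lemma card_not_p_perfect_not_perfect_path_le:
  assumes "\<kappa> \<ge> 0"
    and IH: "\<forall>m<N. real (card {t \<in> catalan_trees d m. \<not> p_perfect p t})
      \<le> exp (- \<kappa> * (real m - real p)) * real (card (catalan_trees d m))"
    and "n \<le> N"
  shows "real (card {t \<in> catalan_trees d n. \<not> p_perfect p t \<and> \<not> perfect_path q t})
    \<le> exp (- \<kappa> * (real n - real q - real d * real p))
      * real (card {t \<in> catalan_trees d n. \<not> perfect_path q t})"
  using assms(3)
proof (induction q arbitrary: n)
  case (Suc q)
  define \<rho> where "\<rho> = exp (- \<kappa> * (real n - real (Suc q) - real d * real p))"
  show ?case
  proof (cases "real n \<le> real (Suc q) + real d * real p")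
    case True
    then have "1 \<le> \<rho>" using \<open>\<kappa> \<ge> 0\<close> by (simp add: \<rho>_def mult_nonneg_nonpos)
    have "real (card {t \<in> catalan_trees d n. \<not> p_perfect p t \<and> \<not> perfect_path (Suc q) t})
        \<le> 1 * real (card {t \<in> catalan_trees d n. \<not> perfect_path (Suc q) t})"
      by (simp, intro card_mono) (auto simp: finite_catalan_trees)
    also have "\<dots> \<le> \<rho> * real (card {t \<in> catalan_trees d n. \<not> perfect_path (Suc q) t})"
      using \<open>1 \<le> \<rho>\<close> by (rule mult_right_mono) simp
    finally show ?thesis unfolding \<rho>_def .
  next
    case False
    moreover have "0 \<le> real d * real p" by simp
    ultimately have "Suc q < n" by linarith
    then obtain n' where n: "n = Suc n'" and "n' \<ge> 1" by (cases n) auto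
    have "real (card {cs \<in> forests d d n'. branching cs \<and> \<not> p_perfect p (Node cs)})
        \<le> exp (- \<kappa> * (real n' - real d * real p)) * real (card {cs \<in> forests d d n'. branching cs})"
      by (rule card_branching_not_p_perfect_le) (use IH Suc.prems n in auto)
    also have "\<dots> \<le> \<rho> * real (card {cs \<in> forests d d n'. branching cs})"
      using \<open>\<kappa> \<ge> 0\<close> by (intro mult_right_mono) (simp_all add: \<rho>_def n algebra_simps)
    finally have "real (card {cs \<in> forests d d n'. branching cs \<and> \<not> p_perfect p (Node cs)})
        \<le> \<rho> * real (card {cs \<in> forests d d n'. branching cs})" .
    moreover have "real (card {c \<in> catalan_trees d n'. \<not> p_perfect p c \<and> \<not> perfect_path q c})
        \<le> \<rho> * real (card {c \<in> catalan_trees d n'. \<not> perfect_path q c})"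
      using Suc.IH[of n'] Suc.prems by (simp add: n \<rho>_def algebra_simps)
    ultimately have "real (card {t \<in> catalan_trees d (Suc n'). \<not> p_perfect p t \<and> \<not> perfect_path (Suc q) t})
        \<le> \<rho> * real (card {t \<in> catalan_trees d (Suc n'). \<not> perfect_path (Suc q) t})"
      by (rule card_not_p_perfect_not_perfect_path_Suc_le[OF \<open>n' \<ge> 1\<close>])
    then show ?thesis by (simp only: \<rho>_def n)
  qed
qed simp

lemma exp_mult_one_minus_le_1:
  fixes x y :: real
  assumes "x \<le> y"
  shows "exp x * (1 - y) \<le> 1"
proof -
  have "exp x * (1 - y) \<le> exp x * exp (- y)"
    using exp_ge_add_one_self[of "- y"] by (intro mult_left_mono) simp_all
  also have "\<dots> \<le> 1" using assms by (simp add: mult_exp_exp)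
  finally show ?thesis .
qed

definition kappa :: "nat \<Rightarrow> nat \<Rightarrow> real" where
  "kappa d p = 1 / (2 * real p * real d ^ p * exp (real p))"

lemma kappa_nonneg: "kappa d p \<ge> 0"
  by (simp add: kappa_def)

lemma kappa_mult_le:
  assumes "p \<ge> 1"
  shows "kappa d p * (real d * real p) \<le> exp (- real p)"
proof (cases "d = 0")
  case False
  have "d \<le> d ^ p" using power_increasing[of 1 p d] assms False by simp
  then have "real d \<le> real d ^ p" by (metis of_nat_le_iff of_nat_power)
  moreover have "0 \<le> real d ^ p" by simp
  ultimately have "real d \<le> 2 * real d ^ p" by linarith
  then show ?thesis
    using assms False by (simp add: kappa_def exp_minus field_simps)
qed (use assms in simp)

lemma card_not_p_perfect_le:
  assumes "d \<ge> 2" and "p \<ge> 1"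
  defines "\<kappa> \<equiv> kappa d p"
  shows "real (card {t \<in> catalan_trees d N. \<not> p_perfect p t})
    \<le> exp (- \<kappa> * max (real N - real p) 0) * real (card (catalan_trees d N))"
proof (induction N rule: less_induct)
  case (less N)
  have "\<kappa> \<ge> 0" by (simp add: \<kappa>_def kappa_nonneg)
  let ?C = "real (card (catalan_trees d N))"
  show ?case
  proof (cases "N \<le> p")
    case True
    have "card {t \<in> catalan_trees d N. \<not> p_perfect p t} \<le> card (catalan_trees d N)"
      by (intro card_mono) (auto simp: finite_catalan_trees)
    then show ?thesis using True by simp
  next
    case False
    have "exp (- \<kappa> * max (real m - real p) 0) \<le> exp (- \<kappa> * (real m - real p))" for m
      using \<open>\<kappa> \<ge> 0\<close> by (simp add: mult_left_mono)
    then have IH: "\<forall>m<N. real (card {t \<in> catalan_trees d m. \<not> p_perfect p t})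
        \<le> exp (- \<kappa> * (real m - real p)) * real (card (catalan_trees d m))"
      using less by (meson mult_right_mono of_nat_0_le_iff order_trans)
    have "{t \<in> catalan_trees d N. \<not> p_perfect p t}
        = {t \<in> catalan_trees d N. \<not> p_perfect p t \<and> \<not> perfect_path p t}"
      using perfect_path_imp_p_perfect by blast
    then have "real (card {t \<in> catalan_trees d N. \<not> p_perfect p t})
        \<le> exp (- \<kappa> * (real N - real p - real d * real p))
          * real (card {t \<in> catalan_trees d N. \<not> perfect_path p t})"
      using card_not_p_perfect_not_perfect_path_le[OF \<open>\<kappa> \<ge> 0\<close> IH, of N p] by simp
    also have "\<dots> \<le> exp (- \<kappa> * (real N - real p - real d * real p)) * ((1 - exp (- real p)) * ?C)"
      using card_not_perfect_path_le[OF assms(1)] False by (intro mult_left_mono) simp_all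
    also have "\<dots> = exp (- \<kappa> * (real N - real p)) * ?C * (exp (\<kappa> * (real d * real p)) * (1 - exp (- real p)))"
      by (simp add: mult_exp_exp algebra_simps)
    also have "\<dots> \<le> exp (- \<kappa> * (real N - real p)) * ?C"
      using exp_mult_one_minus_le_1[OF kappa_mult_le[OF assms(2), of d, folded \<kappa>_def]]
      by (rule mult_left_le) simp
    finally show ?thesis using False by simp
  qed
qed

theorem theorem1p7:
  fixes d p k :: nat
  assumes "d \<ge> 2" and "p \<ge> 1"
  shows "real (card {t \<in> catalan_trees d k. \<not> p_perfect p t}) / real (card (catalan_trees d k))
           \<le> exp (- (1 / (2 * real p * real d ^ p * exp (real p))) * max (real k - real p) 0)"
  using card_not_p_perfect_le[OF assms, of k] unfolding kappa_def
  by (cases "card (catalan_trees d k) = 0") (simp_all add: pos_divide_le_eq)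

end
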